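(* Let $G$ be a finite group and $U,V\leq G\times G$ with $\Delta(G)\leq U$ and $\Delta(G)\leq V$. Then $$\frac{k_1((U\ast V)')}{k_1(U)\cap k_1((U\ast V)')}\cong\frac{k_1(V')}{k_2(U)\cap k_1(V')}$$ and $$\frac{k_2((U\ast V)')}{k_2(V)\cap k_2((U\ast V)')}\cong\frac{k_2(U')}{k_1(V)\cap k_2(U')}.$$
   Context: $\Delta(G)=\{(g,g):g\in G\}$. For $W\leq G\times G$: $p_1(W)=\{g:\exists h,(g,h)\in W\}$, $p_2(W)=\{h:\exists g,(g,h)\in W\}$, $k_1(W)=\{g:(g,1)\in W\}$, $k_2(W)=\{h:(1,h)\in W\}$; $W'$ is the commutator subgroup of $W$. The $\ast$-product is $U\ast V=\{(u,v)\in p_1(U)\times p_2(V):\exists x\in p_2(U)\cap p_1(V),\ (u,x)\in U,\ (x,v)\in V\}$. *)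

theory Defs
  imports "HOL-Algebra.Algebra"
begin

definition diag :: "('a, 'b) monoid_scheme \<Rightarrow> ('a \<times> 'a) set" where
  "diag G = {(g, g) | g. g \<in> carrier G}"

definition p1 :: "('a \<times> 'c) set \<Rightarrow> 'a set" where
  "p1 W = {g. \<exists>h. (g, h) \<in> W}"

definition p2 :: "('a \<times> 'c) set \<Rightarrow> 'c set" where
  "p2 W = {h. \<exists>g. (g, h) \<in> W}"

definition k1 :: "('a, 'b) monoid_scheme \<Rightarrow> ('a \<times> 'a) set \<Rightarrow> 'a set" where
  "k1 G W = {g. (g, \<one>\<^bsub>G\<^esub>) \<in> W}"

definition k2 :: "('a, 'b) monoid_scheme \<Rightarrow> ('a \<times> 'a) set \<Rightarrow> 'a set" where
  "k2 G W = {h. (\<one>\<^bsub>G\<^esub>, h) \<in> W}"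

definition star :: "('a \<times> 'a) set \<Rightarrow> ('a \<times> 'a) set \<Rightarrow> ('a \<times> 'a) set" where
  "star U V = {(u, v). u \<in> p1 U \<and> v \<in> p2 V \<and>
      (\<exists>x \<in> p2 U \<inter> p1 V. (u, x) \<in> U \<and> (x, v) \<in> V)}"

definition comm :: "('a, 'b) monoid_scheme \<Rightarrow> ('a \<times> 'a) set \<Rightarrow> ('a \<times> 'a) set" where
  "comm G W = derived (G \<times>\<times> G) W"

end

theory Submission
  imports Defs
begin

(*
  Let N = k1(U). Since U contains the diagonal, N is normal in G, k2(U) = N, and (u, x) is in U
  exactly when u x^-1 is in N. Hence U * V lies in (N x 1) V, and since N x 1 is normal in G x G,
  commutators can be computed modulo it: (U * V)' lies in (N x 1) V'. Taking first kernels gives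
  k1((U * V)') <= N k1(V'), while V <= U * V gives k1(V') <= k1((U * V)'). Thus both subgroups have
  the same product with N, and the second isomorphism theorem identifies both quotients with that
  product modulo N. The second isomorphism is the first one applied to the transposed subgroups
  V^-1 and U^-1. Only Delta(G) <= U is needed for the first isomorphism and only Delta(G) <= V
  for the second.
*)

lemma (in group) derived_set_mult_normal_subset:
  assumes K: "K \<lhd> G" and H: "H \<subseteq> carrier G"
  shows "derived G (K <#> H) \<subseteq> K <#> derived G H"
proof -
  interpret K: normal K G by (rule K)
  have "derived_set G (K <#> H) \<subseteq> K <#> derived G H"
  proof
    fix z assume "z \<in> derived_set G (K <#> H)"
    then obtain ka ha kb hb where k: "ka \<in> K" "kb \<in> K" and h: "ha \<in> H" "hb \<in> H"
      and z: "z = (ka \<otimes> ha) \<otimes> (kb \<otimes> hb) \<otimes> inv (ka \<otimes> ha) \<otimes> inv (kb \<otimes> hb)"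
      unfolding set_mult_def by blast
    have c: "ka \<in> carrier G" "kb \<in> carrier G" "ha \<in> carrier G" "hb \<in> carrier G"
      using k h H K.subset by auto
    have "K #> (k \<otimes> h) = K #> h" if "k \<in> K" "h \<in> carrier G" for k h
      using that K.subset by (simp add: coset_mult_assoc[symmetric] coset_join2[OF _ K.subgroup_axioms])
    hence "K #> z = K #> (ha \<otimes> hb \<otimes> inv ha \<otimes> inv hb)"
      using z k c by (simp add: K.rcos_sum[symmetric] K.rcos_inv[symmetric])
    moreover have "ha \<otimes> hb \<otimes> inv ha \<otimes> inv hb \<in> derived G H"
      unfolding derived_def using h by (blast intro: generate.incl)
    moreover have "z \<in> K #> z"
      using z c by (simp add: rcos_self[OF _ K.subgroup_axioms])
    ultimately show "z \<in> K <#> derived G H"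
      unfolding set_mult_def r_coset_def by auto
  qed
  moreover have "subgroup (K <#> derived G H) G"
    by (rule mult_norm_subgroup[OF K derived_is_subgroup[OF H]])
  ultimately show ?thesis
    unfolding derived_def by (rule generate_subgroup_incl)
qed

lemma (in group) set_mult_eq_if_between:
  assumes N: "subgroup N G" and BA: "B \<subseteq> A" and AN: "A \<subseteq> N <#> B" and B: "B \<subseteq> carrier G"
  shows "N <#> A = N <#> B"
proof
  show "N <#> B \<subseteq> N <#> A"
    unfolding set_mult_def using BA by (intro UN_mono) auto
  have "N <#> A \<subseteq> N <#> (N <#> B)"
    using AN unfolding set_mult_def by (intro UN_mono) auto
  also have "\<dots> = N <#> B"
    using N B by (simp add: set_mult_assoc[symmetric] subgroup.subset subgroup_mult_id)
  finally show "N <#> A \<subseteq> N <#> B" .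
qed

lemma (in group) quotient_iso_if_set_mult_eq:
  assumes N: "N \<lhd> G" and A: "subgroup A G" and B: "subgroup B G" and eq: "N <#> A = N <#> B"
  shows "G\<lparr>carrier := A\<rparr> Mod (N \<inter> A) \<cong> G\<lparr>carrier := B\<rparr> Mod (N \<inter> B)"
proof -
  interpret A: second_isomorphism_grp N G A
    by (intro second_isomorphism_grp.intro N second_isomorphism_grp_axioms.intro A)
  interpret B: second_isomorphism_grp N G B
    by (intro second_isomorphism_grp.intro N second_isomorphism_grp_axioms.intro B)
  have "G\<lparr>carrier := A\<rparr> Mod (N \<inter> A) \<cong> G\<lparr>carrier := N <#> B\<rparr> Mod N"
    using A.normal_intersection_quotient_isom eq unfolding is_iso_def by auto
  moreover have "G\<lparr>carrier := N <#> B\<rparr> Mod N \<cong> G\<lparr>carrier := B\<rparr> Mod (N \<inter> B)"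
  proof (rule group.iso_sym)
    show "group (G\<lparr>carrier := B\<rparr> Mod (N \<inter> B))"
      using normal.factorgroup_is_group[OF B.normal_subgrp_intersection_normal]
      by (simp add: Int_commute)
    show "G\<lparr>carrier := B\<rparr> Mod (N \<inter> B) \<cong> G\<lparr>carrier := N <#> B\<rparr> Mod N"
      using B.normal_intersection_quotient_isom unfolding is_iso_def by auto
  qed
  ultimately show ?thesis by (rule iso_trans)
qed

lemma diag_subsetD:
  assumes "diag G \<subseteq> U" and "g \<in> carrier G"
  shows "(g, g) \<in> U"
  using assms by (auto simp: diag_def)

lemma subset_star_right:
  assumes "diag G \<subseteq> U" and "V \<subseteq> carrier (G \<times>\<times> G)"
  shows "V \<subseteq> star U V"
proof
  fix z assume z: "z \<in> V"
  then obtain a b where ab: "z = (a, b)" "a \<in> carrier G"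
    using assms(2) by auto
  have "(a, a) \<in> U" using assms(1) ab(2) by (rule diag_subsetD)
  thus "z \<in> star U V" using z ab by (auto simp: star_def p1_def p2_def)
qed

lemma star_in_carrier:
  assumes "U \<subseteq> carrier (G \<times>\<times> G)" and "V \<subseteq> carrier (G \<times>\<times> G)"
  shows "star U V \<subseteq> carrier (G \<times>\<times> G)"
  using assms by (auto simp: star_def p1_def p2_def)

lemma swap_image_eq_converse: "prod.swap ` W = W\<inverse>"
  by auto

lemma k1_converse [simp]: "k1 G (W\<inverse>) = k2 G W"
  unfolding k1_def k2_def by auto

lemma k2_converse [simp]: "k2 G (W\<inverse>) = k1 G W"
  unfolding k1_def k2_def by auto

lemma diag_subset_converse: "diag G \<subseteq> U \<Longrightarrow> diag G \<subseteq> U\<inverse>"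
  unfolding diag_def by auto

lemma star_converse: "star (V\<inverse>) (U\<inverse>) = (star U V)\<inverse>"
  by (auto simp: star_def p1_def p2_def)

context
  fixes G :: "('a, 'b) monoid_scheme" (structure)
  assumes G: "group G"
begin

interpretation group G by (rule G)
interpretation GG: group "G \<times>\<times> G" by (rule DirProd_group[OF G G])

lemma k1_subgroup:
  assumes W: "subgroup W (G \<times>\<times> G)"
  shows "subgroup (k1 G W) G"
proof (rule subgroupI)
  show "k1 G W \<subseteq> carrier G" "k1 G W \<noteq> {}"
    using subgroup.subset[OF W] subgroup.one_closed[OF W] by (auto simp: k1_def)
next
  fix a assume "a \<in> k1 G W"
  hence a: "(a, \<one>) \<in> W" by (simp add: k1_def)
  hence "inv\<^bsub>G \<times>\<times> G\<^esub> (a, \<one>) \<in> W" by (rule subgroup.m_inv_closed[OF W])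
  thus "inv a \<in> k1 G W" using a subgroup.subset[OF W] by (auto simp: k1_def G)
next
  fix a b assume "a \<in> k1 G W" "b \<in> k1 G W"
  hence "(a, \<one>) \<otimes>\<^bsub>G \<times>\<times> G\<^esub> (b, \<one>) \<in> W"
    by (intro subgroup.m_closed[OF W]) (simp_all add: k1_def)
  thus "a \<otimes> b \<in> k1 G W" by (simp add: k1_def)
qed

lemma k1_normal:
  assumes U: "subgroup U (G \<times>\<times> G)" and D: "diag G \<subseteq> U"
  shows "k1 G U \<lhd> G"
  unfolding normal_inv_iff
proof (intro conjI k1_subgroup[OF U] ballI)
  fix x h assume x: "x \<in> carrier G" and h: "h \<in> k1 G U"
  have "(x, x) \<otimes>\<^bsub>G \<times>\<times> G\<^esub> (h, \<one>) \<otimes>\<^bsub>G \<times>\<times> G\<^esub> (inv x, inv x) \<in> U"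
    using h x by (intro subgroup.m_closed[OF U] diag_subsetD[OF D]) (auto simp: k1_def)
  thus "x \<otimes> h \<otimes> inv x \<in> k1 G U"
    using x h subgroup.subset[OF U] by (auto simp: k1_def)
qed

lemma k2_eq_k1:
  assumes U: "subgroup U (G \<times>\<times> G)" and D: "diag G \<subseteq> U"
  shows "k2 G U = k1 G U"
proof -
  have "(\<one>, h) \<in> U \<longleftrightarrow> (inv h, \<one>) \<in> U" if h: "h \<in> carrier G" for h
  proof
    assume "(\<one>, h) \<in> U"
    hence "(\<one>, h) \<otimes>\<^bsub>G \<times>\<times> G\<^esub> (inv h, inv h) \<in> U"
      using h by (intro subgroup.m_closed[OF U] diag_subsetD[OF D]) auto
    thus "(inv h, \<one>) \<in> U" using h by simp
  next
    assume "(inv h, \<one>) \<in> U"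
    hence "(inv h, \<one>) \<otimes>\<^bsub>G \<times>\<times> G\<^esub> (h, h) \<in> U"
      using h by (intro subgroup.m_closed[OF U] diag_subsetD[OF D]) auto
    thus "(\<one>, h) \<in> U" using h by simp
  qed
  moreover have "inv h \<in> k1 G U \<longleftrightarrow> h \<in> k1 G U" if "h \<in> carrier G" for h
    using that k1_subgroup[OF U] by (metis inv_inv subgroup.m_inv_closed)
  ultimately show ?thesis
    using subgroup.subset[OF U] by (auto simp: k1_def k2_def)
qed

lemma comm_subgroup:
  assumes "W \<subseteq> carrier (G \<times>\<times> G)"
  shows "subgroup (comm G W) (G \<times>\<times> G)"
  unfolding comm_def using assms by (rule GG.derived_is_subgroup)

lemma star_subset_set_mult:
  assumes U: "subgroup U (G \<times>\<times> G)" and D: "diag G \<subseteq> U" and V: "V \<subseteq> carrier (G \<times>\<times> G)"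
  shows "star U V \<subseteq> (k1 G U \<times> {\<one>}) <#>\<^bsub>G \<times>\<times> G\<^esub> V"
proof
  fix z assume "z \<in> star U V"
  then obtain u x v where z: "z = (u, v)" and ux: "(u, x) \<in> U" and xv: "(x, v) \<in> V"
    by (auto simp: star_def)
  have c: "u \<in> carrier G" "x \<in> carrier G" "v \<in> carrier G"
    using ux xv subgroup.subset[OF U] V by auto
  have "(u, x) \<otimes>\<^bsub>G \<times>\<times> G\<^esub> (inv x, inv x) \<in> U"
    using c by (intro subgroup.m_closed[OF U] diag_subsetD[OF D] ux) auto
  hence "u \<otimes> inv x \<in> k1 G U"
    using c by (simp add: k1_def)
  moreover have "z = (u \<otimes> inv x, \<one>) \<otimes>\<^bsub>G \<times>\<times> G\<^esub> (x, v)"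
    using z c by (simp add: m_assoc)
  ultimately show "z \<in> (k1 G U \<times> {\<one>}) <#>\<^bsub>G \<times>\<times> G\<^esub> V"
    using xv unfolding set_mult_def by blast
qed

lemma k1_set_mult:
  assumes "N \<subseteq> carrier G" and "W \<subseteq> carrier (G \<times>\<times> G)"
  shows "k1 G ((N \<times> {\<one>}) <#>\<^bsub>G \<times>\<times> G\<^esub> W) = N <#> k1 G W"
proof
  show "k1 G ((N \<times> {\<one>}) <#>\<^bsub>G \<times>\<times> G\<^esub> W) \<subseteq> N <#> k1 G W"
  proof
    fix x assume "x \<in> k1 G ((N \<times> {\<one>}) <#>\<^bsub>G \<times>\<times> G\<^esub> W)"
    hence "(x, \<one>) \<in> (N \<times> {\<one>}) <#>\<^bsub>G \<times>\<times> G\<^esub> W"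
      by (simp add: k1_def)
    then obtain p q where p: "p \<in> N \<times> {\<one>}" and q: "q \<in> W"
      and pq: "(x, \<one>) = p \<otimes>\<^bsub>G \<times>\<times> G\<^esub> q"
      unfolding set_mult_def by blast
    obtain n a b where n: "n \<in> N" and ab: "(a, b) \<in> W"
      and eq: "(x, \<one>) = (n, \<one>) \<otimes>\<^bsub>G \<times>\<times> G\<^esub> (a, b)"
      using p q pq by (cases p, cases q) blast
    have "b \<in> carrier G"
      using ab assms(2) by auto
    with eq have "b = \<one>" "x = n \<otimes> a"
      by simp_all
    thus "x \<in> N <#> k1 G W"
      using n ab unfolding k1_def set_mult_def by blast
  qed
  show "N <#> k1 G W \<subseteq> k1 G ((N \<times> {\<one>}) <#>\<^bsub>G \<times>\<times> G\<^esub> W)"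
  proof
    fix x assume "x \<in> N <#> k1 G W"
    then obtain n c where n: "n \<in> N" and c: "(c, \<one>) \<in> W" and x: "x = n \<otimes> c"
      unfolding k1_def set_mult_def by blast
    have "(x, \<one>) = (n, \<one>) \<otimes>\<^bsub>G \<times>\<times> G\<^esub> (c, \<one>)"
      using x by simp
    moreover have "(n, \<one>) \<in> N \<times> {\<one>}"
      using n by simp
    ultimately have "(x, \<one>) \<in> (N \<times> {\<one>}) <#>\<^bsub>G \<times>\<times> G\<^esub> W"
      using c unfolding set_mult_def by blast
    thus "x \<in> k1 G ((N \<times> {\<one>}) <#>\<^bsub>G \<times>\<times> G\<^esub> W)"
      by (simp add: k1_def)
  qed
qed

lemma k1_comm_star_subset:
  assumes U: "subgroup U (G \<times>\<times> G)" and V: "subgroup V (G \<times>\<times> G)" and D: "diag G \<subseteq> U"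
  shows "k1 G (comm G (star U V)) \<subseteq> k1 G U <#> k1 G (comm G V)"
proof -
  let ?K = "k1 G U \<times> {\<one>}"
  have K: "?K \<lhd> G \<times>\<times> G"
    by (rule DirProd_normal[OF G k1_normal[OF U D] one_is_normal])
  have Vc: "V \<subseteq> carrier (G \<times>\<times> G)"
    by (rule subgroup.subset[OF V])
  have "comm G (star U V) \<subseteq> derived (G \<times>\<times> G) (?K <#>\<^bsub>G \<times>\<times> G\<^esub> V)"
    unfolding comm_def by (rule GG.mono_derived[OF star_subset_set_mult[OF U D Vc]])
  also have "\<dots> \<subseteq> ?K <#>\<^bsub>G \<times>\<times> G\<^esub> comm G V"
    unfolding comm_def by (rule GG.derived_set_mult_normal_subset[OF K Vc])
  finally have "k1 G (comm G (star U V)) \<subseteq> k1 G (?K <#>\<^bsub>G \<times>\<times> G\<^esub> comm G V)"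
    by (auto simp: k1_def)
  also have "\<dots> = k1 G U <#> k1 G (comm G V)"
    using subgroup.subset[OF k1_subgroup[OF U]] subgroup.subset[OF comm_subgroup[OF Vc]]
    by (rule k1_set_mult)
  finally show ?thesis .
qed

lemma k1_comm_subset_star:
  assumes D: "diag G \<subseteq> U" and V: "subgroup V (G \<times>\<times> G)"
  shows "k1 G (comm G V) \<subseteq> k1 G (comm G (star U V))"
  using GG.mono_derived[OF subset_star_right[OF D subgroup.subset[OF V]]]
  unfolding comm_def k1_def by auto

lemma k1_comm_star_quotient_iso:
  assumes U: "subgroup U (G \<times>\<times> G)" and V: "subgroup V (G \<times>\<times> G)" and D: "diag G \<subseteq> U"
  shows "(G\<lparr>carrier := k1 G (comm G (star U V))\<rparr>) Mod (k1 G U \<inter> k1 G (comm G (star U V)))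
           \<cong> (G\<lparr>carrier := k1 G (comm G V)\<rparr>) Mod (k2 G U \<inter> k1 G (comm G V))"
proof -
  have N: "k1 G U \<lhd> G"
    by (rule k1_normal[OF U D])
  have A: "subgroup (k1 G (comm G (star U V))) G"
    using subgroup.subset[OF U] subgroup.subset[OF V]
    by (intro k1_subgroup comm_subgroup star_in_carrier)
  have B: "subgroup (k1 G (comm G V)) G"
    using subgroup.subset[OF V] by (intro k1_subgroup comm_subgroup)
  have "k1 G U <#> k1 G (comm G (star U V)) = k1 G U <#> k1 G (comm G V)"
    by (rule set_mult_eq_if_between[OF normal_imp_subgroup[OF N] k1_comm_subset_star[OF D V]
          k1_comm_star_subset[OF U V D] subgroup.subset[OF B]])
  with quotient_iso_if_set_mult_eq[OF N A B] show ?thesis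
    by (simp add: k2_eq_k1[OF U D])
qed

lemma swap_hom: "group_hom (G \<times>\<times> G) (G \<times>\<times> G) prod.swap"
  by (intro group_hom.intro GG.is_group group_hom_axioms.intro homI) auto

lemma subgroup_converse:
  assumes "subgroup W (G \<times>\<times> G)"
  shows "subgroup (W\<inverse>) (G \<times>\<times> G)"
  using group_hom.subgroup_img_is_subgroup[OF swap_hom assms]
  by (simp add: swap_image_eq_converse)

lemma comm_converse:
  assumes "W \<subseteq> carrier (G \<times>\<times> G)"
  shows "comm G (W\<inverse>) = (comm G W)\<inverse>"
  using group_hom.derived_img[OF swap_hom assms]
  by (simp add: comm_def swap_image_eq_converse)

lemma k2_comm_star_quotient_iso:
  assumes U: "subgroup U (G \<times>\<times> G)" and V: "subgroup V (G \<times>\<times> G)" and D: "diag G \<subseteq> V"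
  shows "(G\<lparr>carrier := k2 G (comm G (star U V))\<rparr>) Mod (k2 G V \<inter> k2 G (comm G (star U V)))
           \<cong> (G\<lparr>carrier := k2 G (comm G U)\<rparr>) Mod (k1 G V \<inter> k2 G (comm G U))"
  using k1_comm_star_quotient_iso[OF subgroup_converse[OF V] subgroup_converse[OF U]
      diag_subset_converse[OF D]]
  unfolding star_converse comm_converse[OF subgroup.subset[OF U]]
    comm_converse[OF star_in_carrier[OF subgroup.subset[OF U] subgroup.subset[OF V]]]
    k1_converse k2_converse .

end

theorem lemma5p5:
  fixes G :: "('a, 'b) monoid_scheme"
  assumes "group G" and "finite (carrier G)"
    and "subgroup U (G \<times>\<times> G)" and "subgroup V (G \<times>\<times> G)"
    and "diag G \<subseteq> U" and "diag G \<subseteq> V"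
  shows "((G\<lparr>carrier := k1 G (comm G (star U V))\<rparr>) Mod (k1 G U \<inter> k1 G (comm G (star U V)))
           \<cong> (G\<lparr>carrier := k1 G (comm G V)\<rparr>) Mod (k2 G U \<inter> k1 G (comm G V))) \<and>
         ((G\<lparr>carrier := k2 G (comm G (star U V))\<rparr>) Mod (k2 G V \<inter> k2 G (comm G (star U V)))
           \<cong> (G\<lparr>carrier := k2 G (comm G U)\<rparr>) Mod (k1 G V \<inter> k2 G (comm G U)))"
  using k1_comm_star_quotient_iso[OF assms(1,3,4,5)] k2_comm_star_quotient_iso[OF assms(1,3,4,6)]
  by (rule conjI)

end
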